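(* Let $\mathrm{V}=\{1,\dots,n\}$ with $n=r_1r_2\cdots r_k$ for integers $k\ge2$ and $r_1,\dots,r_k\ge2$. Then there exist a graph $\mathrm{G}$ on $\mathrm{V}$, a clique coverage of $\mathrm{G}$ whose cliques have sizes in $\{r_1,\dots,r_k\}$, and a sequence of $\sum_{i=1}^k\prod_{j\ne i}r_j$ cliques from it, along which the clique-gossip averaging algorithm satisfies $\mathbf{x}(T)=\big(\frac1n\sum_j\mathbf{x}_j(0)\big)\mathbf{1}$ with $T=\sum_{i=1}^k\prod_{j\ne i}r_j$, for every initial value $\mathbf{x}(0)\in\mathbb{R}^n$.
   Context: A clique of a simple undirected graph $\mathrm{G}$ on $\mathrm{V}$ is a vertex subset inducing a complete subgraph; a clique coverage is a finite set of cliques whose union is $\mathrm{V}$ and whose union of induced subgraphs is connected. The clique-gossip averaging algorithm along a sequence of cliques $\mathrm{Q}_0,\mathrm{Q}_1,\dots$ acts on $\mathbf{x}(t)\in\mathbb{R}^n$ by $\mathbf{x}_i(t+1)=\frac{1}{|\mathrm{Q}_t|}\sum_{j\in\mathrm{Q}_t}\mathbf{x}_j(t)$ if $i\in\mathrm{Q}_t$ and $\mathbf{x}_i(t+1)=\mathbf{x}_i(t)$ otherwise. $\mathbf{1}$ is the all-ones vector. *)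

theory Defs
  imports "HOL-Analysis.Analysis"
begin

definition simple_graph :: "nat set \<Rightarrow> (nat \<Rightarrow> nat \<Rightarrow> bool) \<Rightarrow> bool" where
  "simple_graph V E \<longleftrightarrow> (\<forall>u v. E u v \<longrightarrow> u \<in> V \<and> v \<in> V \<and> u \<noteq> v \<and> E v u)"

definition is_clique :: "nat set \<Rightarrow> (nat \<Rightarrow> nat \<Rightarrow> bool) \<Rightarrow> nat set \<Rightarrow> bool" where
  "is_clique V E Q \<longleftrightarrow> Q \<subseteq> V \<and> (\<forall>u\<in>Q. \<forall>v\<in>Q. u \<noteq> v \<longrightarrow> E u v)"

definition cover_edge :: "(nat \<Rightarrow> nat \<Rightarrow> bool) \<Rightarrow> nat set set \<Rightarrow> nat \<Rightarrow> nat \<Rightarrow> bool" where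
  "cover_edge E C u v \<longleftrightarrow> (\<exists>Q\<in>C. u \<in> Q \<and> v \<in> Q \<and> E u v)"

definition clique_coverage :: "nat set \<Rightarrow> (nat \<Rightarrow> nat \<Rightarrow> bool) \<Rightarrow> nat set set \<Rightarrow> bool" where
  "clique_coverage V E C \<longleftrightarrow> finite C \<and> (\<forall>Q\<in>C. is_clique V E Q) \<and> \<Union>C = V \<and>
     (\<forall>u\<in>V. \<forall>v\<in>V. (cover_edge E C)\<^sup>*\<^sup>* u v)"

definition gossip_step :: "nat set \<Rightarrow> (nat \<Rightarrow> real) \<Rightarrow> (nat \<Rightarrow> real)" where
  "gossip_step Q x = (\<lambda>i. if i \<in> Q then (\<Sum>j\<in>Q. x j) / real (card Q) else x i)"

fun gossip :: "(nat \<Rightarrow> nat set) \<Rightarrow> (nat \<Rightarrow> real) \<Rightarrow> nat \<Rightarrow> (nat \<Rightarrow> real)" where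
  "gossip Qs x0 0 = x0"
| "gossip Qs x0 (Suc t) = gossip_step (Qs t) (gossip Qs x0 t)"

end

theory Submission
  imports Defs
begin

text \<open>Identify a vertex set of size r_1 ... r_(k+1) with an r_(k+1) by (r_1 ... r_k) grid.
  Averaging every row by the schedule for k factors and then every column in a single step
  leaves the global mean everywhere, because after the row phase each column holds one copy of
  every row mean. This gives the length recursion T_(k+1) = r_(k+1) T_k + r_1 ... r_k.
  The graph joins vertices lying in a common clique of the schedule. It is connected because
  a vertex set that every clique either contains or avoids keeps its sum under gossip, which
  is compatible with global averaging only if the set is everything.\<close>

definition averages :: "nat set list \<Rightarrow> nat set \<Rightarrow> bool" where
  "averages qs A \<longleftrightarrow> (\<forall>x. \<forall>i\<in>A. fold gossip_step qs x i = sum x A / real (card A))"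

lemma fold_gossip_step_outside:
  "i \<notin> \<Union>(set qs) \<Longrightarrow> fold gossip_step qs x i = x i"
  by (induction qs arbitrary: x) (auto simp: gossip_step_def)

lemma averages_singleton: "averages [Q] Q"
  by (simp add: averages_def gossip_step_def)

lemma averages_concat_disjoint:
  assumes avg: "\<forall>c<N. averages (qs c) (B c)"
    and sub: "\<forall>c<N. \<forall>Q\<in>set (qs c). Q \<subseteq> B c"
    and disj: "disjoint_family_on B {..<N}"
    and "c < N" "i \<in> B c"
  shows "fold gossip_step (concat (map qs [0..<N])) x i = sum x (B c) / real (card (B c))"
proof -
  define pre where "pre = concat (map qs [0..<c])"
  define post where "post = concat (map qs [Suc c..<N])"
  have split: "concat (map qs [0..<N]) = pre @ qs c @ post"
    using \<open>c < N\<close> upt_add_eq_append[of 0 c "N - c"] upt_conv_Cons[of c N]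
    by (simp add: pre_def post_def)
  have untouched: "B c \<inter> \<Union>(set (concat (map qs cs))) = {}" if "c \<notin> set cs" "set cs \<subseteq> {..<N}" for cs
  proof -
    have "B c \<inter> Q = {}" if "c' \<in> set cs" "Q \<in> set (qs c')" for c' Q
    proof -
      have "c' \<noteq> c" "c' < N" using that(1) \<open>c \<notin> set cs\<close> \<open>set cs \<subseteq> {..<N}\<close> by auto
      then have "B c \<inter> B c' = {}"
        using disj \<open>c < N\<close> by (simp add: disjoint_family_on_def)
      moreover have "Q \<subseteq> B c'" using sub \<open>c' < N\<close> that(2) by blast
      ultimately show ?thesis by blast
    qed
    then show ?thesis by auto
  qed
  have "B c \<inter> \<Union>(set pre) = {}" "B c \<inter> \<Union>(set post) = {}"
    unfolding pre_def post_def using \<open>c < N\<close> by (intro untouched; auto)+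
  define y where "y = fold gossip_step pre x"
  have "sum y (B c) = sum x (B c)"
    using \<open>B c \<inter> \<Union>(set pre) = {}\<close>
    by (intro sum.cong) (auto simp: y_def intro!: fold_gossip_step_outside)
  moreover have "i \<notin> \<Union>(set post)"
    using \<open>B c \<inter> \<Union>(set post) = {}\<close> \<open>i \<in> B c\<close> by blast
  ultimately show ?thesis
    using avg \<open>c < N\<close> \<open>i \<in> B c\<close>
    by (simp add: split y_def[symmetric] fold_gossip_step_outside averages_def)
qed

lemma card_grid_lines:
  assumes "bij_betw f ({..<a} \<times> {..<m}) A"
  shows card_grid_row: "c < a \<Longrightarrow> card (f ` ({c} \<times> {..<m})) = m"
    and card_grid_col: "j < m \<Longrightarrow> card (f ` ({..<a} \<times> {j})) = a"
proof -
  have inj: "inj_on f ({..<a} \<times> {..<m})" using assms by (rule bij_betw_imp_inj_on)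
  show "card (f ` ({c} \<times> {..<m})) = m" if "c < a"
    using that card_image[OF inj_on_subset[OF inj, of "{c} \<times> {..<m}"]] by (auto simp: card_cartesian_product)
  show "card (f ` ({..<a} \<times> {j})) = a" if "j < m"
    using that card_image[OF inj_on_subset[OF inj, of "{..<a} \<times> {j}"]] by (auto simp: card_cartesian_product)
qed

lemma sum_grid_rows:
  assumes "bij_betw f ({..<a} \<times> {..<m}) A"
  shows "sum x A = (\<Sum>c<a. sum x (f ` ({c} \<times> {..<m})))"
proof -
  have inj: "inj_on f ({..<a} \<times> {..<m})" and A: "A = f ` ({..<a} \<times> {..<m})"
    using assms by (auto simp: bij_betw_def)
  have "sum x A = (\<Sum>c<a. \<Sum>j<m. x (f (c, j)))"
    using sum.reindex[OF inj, of x] by (simp add: A sum.cartesian_product)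
  also have "\<dots> = (\<Sum>c<a. sum x (f ` ({c} \<times> {..<m})))"
  proof (rule sum.cong[OF refl])
    fix c assume "c \<in> {..<a}"
    then have "inj_on (\<lambda>j. f (c, j)) {..<m}" using inj by (auto simp: inj_on_def)
    moreover have "f ` ({c} \<times> {..<m}) = (\<lambda>j. f (c, j)) ` {..<m}" by auto
    ultimately show "(\<Sum>j<m. x (f (c, j))) = sum x (f ` ({c} \<times> {..<m}))"
      by (simp add: sum.reindex)
  qed
  finally show ?thesis .
qed

lemma averages_grid:
  assumes f: "bij_betw f ({..<a} \<times> {..<m}) A"
    and rows_avg: "\<forall>c<a. averages (qs c) (f ` ({c} \<times> {..<m}))"
    and rows_sub: "\<forall>c<a. \<forall>Q\<in>set (qs c). Q \<subseteq> f ` ({c} \<times> {..<m})"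
  shows "averages (concat (map qs [0..<a]) @ map (\<lambda>j. f ` ({..<a} \<times> {j})) [0..<m]) A"
proof -
  define row where "row c = f ` ({c} \<times> {..<m})" for c
  define col where "col j = f ` ({..<a} \<times> {j})" for j
  have inj: "inj_on f ({..<a} \<times> {..<m})" and A: "A = f ` ({..<a} \<times> {..<m})"
    using f by (auto simp: bij_betw_def)
  have "disjoint_family_on row {..<a}" "disjoint_family_on col {..<m}"
    using inj by (auto simp: disjoint_family_on_def row_def col_def inj_on_def)
  note row_disj = this(1) and col_disj = this(2)
  show ?thesis
    unfolding averages_def col_def[symmetric]
  proof (intro allI ballI)
    fix x i assume "i \<in> A"
    then obtain c j where cj: "c < a" "j < m" "i = f (c, j)" using A by auto
    define y where "y = fold gossip_step (concat (map qs [0..<a])) x"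
    have y_row: "y (f (c', j)) = sum x (row c') / real m" if "c' < a" for c'
      using averages_concat_disjoint[OF rows_avg[folded row_def] rows_sub[folded row_def] row_disj]
        that \<open>j < m\<close> card_grid_row[OF f] by (auto simp: y_def row_def)
    have "fold gossip_step (map col [0..<m]) y i = sum y (col j) / real a"
    proof -
      have "i \<in> col j" using cj by (auto simp: col_def)
      then show ?thesis
        using averages_concat_disjoint[of m "\<lambda>j. [col j]" col, OF _ _ col_disj] cj
        by (simp add: averages_singleton card_grid_col[OF f, folded col_def])
    qed
    also have "sum y (col j) = (\<Sum>c'<a. y (f (c', j)))"
    proof -
      have "inj_on (\<lambda>c'. f (c', j)) {..<a}" using inj \<open>j < m\<close> by (auto simp: inj_on_def)
      moreover have "col j = (\<lambda>c'. f (c', j)) ` {..<a}" by (auto simp: col_def)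
      ultimately show ?thesis by (simp add: sum.reindex)
    qed
    also have "\<dots> = sum x A / real m"
      by (simp add: y_row sum_grid_rows[OF f] row_def sum_divide_distrib)
    finally show "fold gossip_step (concat (map qs [0..<a]) @ map col [0..<m]) x i
        = sum x A / real (card A)"
      using f by (simp add: y_def bij_betw_same_card[of f, symmetric] card_cartesian_product mult.commute)
  qed
qed

lemma averaging_schedule_product:
  assumes "finite A" "card A = a * m"
    and schedule: "\<And>B. finite B \<Longrightarrow> card B = m \<Longrightarrow>
      \<exists>qs. length qs = L \<and> (\<forall>Q\<in>set qs. Q \<subseteq> B \<and> card Q \<in> R) \<and> averages qs B"
  shows "\<exists>qs. length qs = a * L + m \<and> (\<forall>Q\<in>set qs. Q \<subseteq> A \<and> card Q \<in> insert a R) \<and> averages qs A"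
proof -
  obtain f where f: "bij_betw f ({..<a} \<times> {..<m}) A"
    using assms(1,2) by (metis bij_betw_iff_card card_cartesian_product card_lessThan finite_SigmaI
        finite_lessThan mult.commute)
  have "\<exists>q. length q = L \<and> (\<forall>Q\<in>set q. Q \<subseteq> f ` ({c} \<times> {..<m}) \<and> card Q \<in> R)
      \<and> averages q (f ` ({c} \<times> {..<m}))" if "c < a" for c
    using schedule card_grid_row[OF f that] by simp
  then obtain qs where qs: "\<And>c. c < a \<Longrightarrow> length (qs c) = L \<and>
      (\<forall>Q\<in>set (qs c). Q \<subseteq> f ` ({c} \<times> {..<m}) \<and> card Q \<in> R) \<and> averages (qs c) (f ` ({c} \<times> {..<m}))"
    by metis
  define schedule where "schedule = concat (map qs [0..<a]) @ map (\<lambda>j. f ` ({..<a} \<times> {j})) [0..<m]"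
  have lengths: "map (length \<circ> qs) [0..<a] = map (\<lambda>_. L) [0..<a]"
    using qs by (intro map_cong) auto
  have "length (concat (map qs [0..<a])) = a * L"
    unfolding length_concat map_map lengths by (simp add: sum_list_triv)
  then have "length schedule = a * L + m" by (simp add: schedule_def)
  moreover have "\<forall>Q\<in>set schedule. Q \<subseteq> A \<and> card Q \<in> insert a R"
    using qs card_grid_col[OF f] bij_betw_imp_surj_on[OF f] by (fastforce simp: schedule_def)
  moreover have "averages schedule A"
    unfolding schedule_def using f qs by (intro averages_grid) auto
  ultimately show ?thesis by blast
qed

lemma sum_prod_except_Suc:
  fixes r :: "nat \<Rightarrow> nat"
  shows "(\<Sum>i=1..Suc k. \<Prod>j\<in>{1..Suc k}-{i}. r j)
    = r (Suc k) * (\<Sum>i=1..k. \<Prod>j\<in>{1..k}-{i}. r j) + (\<Prod>i=1..k. r i)"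
proof -
  have "(\<Prod>j\<in>{1..Suc k}-{i}. r j) = r (Suc k) * (\<Prod>j\<in>{1..k}-{i}. r j)" if "i \<in> {1..k}" for i
  proof -
    have "{1..Suc k}-{i} = insert (Suc k) ({1..k}-{i})" using that by auto
    then show ?thesis by simp
  qed
  moreover have "{1..Suc k}-{Suc k} = {1..k}" by auto
  ultimately show ?thesis
    by (simp add: sum_distrib_left)
qed

lemma averaging_schedule_exists:
  fixes r :: "nat \<Rightarrow> nat"
  assumes "finite A" "card A = (\<Prod>i=1..k. r i)"
  shows "\<exists>qs. length qs = (\<Sum>i=1..k. \<Prod>j\<in>{1..k}-{i}. r j)
    \<and> (\<forall>Q\<in>set qs. Q \<subseteq> A \<and> card Q \<in> r ` {1..k}) \<and> averages qs A"
  using assms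
proof (induction k arbitrary: A)
  case 0
  then obtain a where "A = {a}" by (auto simp: card_Suc_eq)
  then show ?case by (intro exI[of _ "[]"]) (simp add: averages_def)
next
  case (Suc k)
  have "card A = r (Suc k) * (\<Prod>i=1..k. r i)" by (simp add: Suc.prems(2))
  then have "\<exists>qs. length qs = r (Suc k) * (\<Sum>i=1..k. \<Prod>j\<in>{1..k}-{i}. r j) + (\<Prod>i=1..k. r i)
      \<and> (\<forall>Q\<in>set qs. Q \<subseteq> A \<and> card Q \<in> insert (r (Suc k)) (r ` {1..k})) \<and> averages qs A"
    by (rule averaging_schedule_product[OF Suc.prems(1) _ Suc.IH])
  moreover have "r ` {1..Suc k} = insert (r (Suc k)) (r ` {1..k})"
    by (simp add: atLeastAtMostSuc_conv)
  ultimately show ?case by (simp only: sum_prod_except_Suc)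
qed

lemma sum_fold_gossip_step_invariant:
  assumes "finite S" "\<forall>Q\<in>set qs. Q \<subseteq> S \<or> Q \<inter> S = {}"
  shows "sum (fold gossip_step qs x) S = sum x S"
  using assms(2)
proof (induction qs arbitrary: x)
  case (Cons Q qs)
  have "sum (gossip_step Q x) S = sum x S"
  proof (cases "Q \<subseteq> S")
    case True
    have "sum (gossip_step Q x) Q = sum x Q"
      using finite_subset[OF True assms(1)] by (cases "Q = {}") (simp_all add: gossip_step_def)
    moreover have "sum (gossip_step Q x) (S - Q) = sum x (S - Q)"
      by (intro sum.cong) (auto simp: gossip_step_def)
    ultimately show ?thesis
      using True assms(1) by (metis sum.subset_diff)
  next
    case False
    then have "Q \<inter> S = {}" using Cons.prems by auto
    then show ?thesis by (intro sum.cong) (auto simp: gossip_step_def)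
  qed
  then show ?case using Cons by simp
qed simp

lemma averages_invariant_subset_eq:
  assumes avg: "averages qs V" and "finite V" "S \<subseteq> V" "S \<noteq> {}"
    and "\<forall>Q\<in>set qs. Q \<subseteq> S \<or> Q \<inter> S = {}"
  shows "S = V"
proof -
  define x :: "nat \<Rightarrow> real" where "x = indicator S"
  have "finite S" using assms(2,3) finite_subset by blast
  have "sum x V = sum x S"
    using assms(2,3) by (intro sum.mono_neutral_right) (auto simp: x_def)
  also have "\<dots> = card S" by (simp add: x_def)
  finally have "sum x V = card S" .
  then have "sum (fold gossip_step qs x) S = (\<Sum>i\<in>S. card S / card V)"
    using avg assms(3) unfolding averages_def by (intro sum.cong) auto
  moreover have "sum (fold gossip_step qs x) S = card S"
    using sum_fold_gossip_step_invariant[OF \<open>finite S\<close> assms(5)] by (simp add: x_def)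
  moreover have "card S > 0" using \<open>finite S\<close> \<open>S \<noteq> {}\<close> by (simp add: card_gt_0_iff)
  moreover have "card V > 0" using assms(2,3) \<open>S \<noteq> {}\<close> by (auto simp: card_gt_0_iff)
  ultimately have "card S = card V" by (simp add: field_simps)
  then show ?thesis using assms(2,3) card_subset_eq by blast
qed

lemma averages_covers:
  assumes avg: "averages qs V" and "finite V" "card V \<ge> 2"
  shows "V \<subseteq> \<Union>(set qs)"
proof
  fix v assume "v \<in> V"
  show "v \<in> \<Union>(set qs)"
  proof (rule ccontr)
    assume "v \<notin> \<Union>(set qs)"
    define x :: "nat \<Rightarrow> real" where "x j = (if j = v then 1 else 0)" for j
    have "1 = sum x V / card V"
      using avg \<open>v \<in> V\<close> fold_gossip_step_outside[OF \<open>v \<notin> \<Union>(set qs)\<close>, of x]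
      by (simp add: averages_def x_def)
    also have "sum x V = 1"
      using \<open>finite V\<close> \<open>v \<in> V\<close> by (simp add: x_def)
    finally show False using \<open>card V \<ge> 2\<close> by simp
  qed
qed

lemma averages_connected:
  assumes avg: "averages qs V" and "finite V" and cliques: "\<forall>Q\<in>set qs. is_clique V E Q"
    and "u \<in> V" "v \<in> V"
  shows "(cover_edge E (set qs))\<^sup>*\<^sup>* u v"
proof -
  define S where "S = {w \<in> V. (cover_edge E (set qs))\<^sup>*\<^sup>* u w}"
  have "Q \<subseteq> S" if "Q \<in> set qs" "a \<in> Q" "a \<in> S" for Q a
  proof
    fix b assume "b \<in> Q"
    then have "a = b \<or> cover_edge E (set qs) a b"
      using that cliques unfolding cover_edge_def is_clique_def by blast
    moreover have "b \<in> V" using \<open>b \<in> Q\<close> that(1) cliques by (auto simp: is_clique_def)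
    ultimately show "b \<in> S"
      using \<open>a \<in> S\<close> by (auto simp: S_def intro: rtranclp.rtrancl_into_rtrancl)
  qed
  then have "S = V"
    using \<open>u \<in> V\<close> by (intro averages_invariant_subset_eq[OF avg \<open>finite V\<close>]) (auto simp: S_def)
  then show ?thesis using \<open>v \<in> V\<close> by (auto simp: S_def)
qed

definition clique_graph :: "nat set set \<Rightarrow> nat \<Rightarrow> nat \<Rightarrow> bool" where
  "clique_graph C u v \<longleftrightarrow> u \<noteq> v \<and> (\<exists>Q\<in>C. u \<in> Q \<and> v \<in> Q)"

lemma simple_graph_clique_graph: "\<Union>C \<subseteq> V \<Longrightarrow> simple_graph V (clique_graph C)"
  unfolding simple_graph_def clique_graph_def by blast

lemma is_clique_clique_graph: "Q \<in> C \<Longrightarrow> Q \<subseteq> V \<Longrightarrow> is_clique V (clique_graph C) Q"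
  unfolding is_clique_def clique_graph_def by blast

lemma clique_coverage_clique_graph:
  assumes "averages qs V" "finite V" "card V \<ge> 2" "\<forall>Q\<in>set qs. Q \<subseteq> V"
  shows "clique_coverage V (clique_graph (set qs)) (set qs)"
proof -
  have cliques: "\<forall>Q\<in>set qs. is_clique V (clique_graph (set qs)) Q"
    using assms(4) by (simp add: is_clique_clique_graph)
  moreover have "\<Union>(set qs) = V" using averages_covers[OF assms(1-3)] assms(4) by blast
  ultimately show ?thesis
    using averages_connected[OF assms(1,2) cliques] by (simp add: clique_coverage_def)
qed

lemma gossip_nth_eq_fold:
  "t \<le> length qs \<Longrightarrow> gossip (\<lambda>t. qs ! t) x0 t = fold gossip_step (take t qs) x0"
  by (induction t) (simp_all add: take_Suc_conv_app_nth)

theorem mainTheorem8: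
  fixes k :: nat and r :: "nat \<Rightarrow> nat" and n :: nat
  assumes "k \<ge> 2"
    and "\<forall>i\<in>{1..k}. r i \<ge> 2"
    and "n = (\<Prod>i=1..k. r i)"
  shows "\<exists>E C Qs. simple_graph {1..n} E \<and> clique_coverage {1..n} E C
     \<and> (\<forall>Q\<in>C. card Q \<in> r ` {1..k})
     \<and> (\<forall>t < (\<Sum>i=1..k. \<Prod>j\<in>{1..k}-{i}. r j). Qs t \<in> C)
     \<and> (\<forall>x0 :: nat \<Rightarrow> real. \<forall>i\<in>{1..n}.
          gossip Qs x0 (\<Sum>i=1..k. \<Prod>j\<in>{1..k}-{i}. r j) i
            = (\<Sum>j=1..n. x0 j) / real n)"
proof -
  let ?T = "\<Sum>i=1..k. \<Prod>j\<in>{1..k}-{i}. r j"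
  obtain qs where len: "length qs = ?T" and cliques: "\<forall>Q\<in>set qs. Q \<subseteq> {1..n} \<and> card Q \<in> r ` {1..k}"
    and avg: "averages qs {1..n}"
    using averaging_schedule_exists[where A="{1..n}" and k=k and r=r] assms(3) by auto
  have "2 ^ 2 \<le> (\<Prod>i=1..k. 2::nat)" using power_increasing[OF assms(1), of "2::nat"] by simp
  also have "\<dots> \<le> n" unfolding assms(3) using assms(2) by (intro prod_mono) auto
  finally have "card {1..n} \<ge> 2" by simp
  then have "clique_coverage {1..n} (clique_graph (set qs)) (set qs)"
    using avg cliques by (intro clique_coverage_clique_graph) auto
  moreover have "simple_graph {1..n} (clique_graph (set qs))"
    using cliques by (intro simple_graph_clique_graph) auto
  moreover have "gossip ((!) qs) x0 ?T i = (\<Sum>j=1..n. x0 j) / real n" if "i \<in> {1..n}" for x0 i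
    using avg that by (simp add: gossip_nth_eq_fold len averages_def)
  ultimately show ?thesis
    using cliques len by (intro exI[of _ "clique_graph (set qs)"] exI[of _ "set qs"] exI[of _ "(!) qs"]) auto
qed

end
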